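(* Let $P\subset\mathbb R^d$ be a rational $d$-polytope, $\bm a\in N(P)$, and $F$ the facet of $P$ with inner normal vector $\bm a$. Let $k\in\mathbb Z$ and let $\bm v\in H_{\bm a,k}$ be generic in $\mathcal A_P$, i.e. $\bm v\notin H$ for every $H\in\mathcal A_P$ with $H\neq H_{\bm a,k}$. Then for every sufficiently small $\varepsilon>0$: (1) $\mathrm{TL}_{P,\bm v}(t)-\mathrm{TL}_{P,\bm v+\varepsilon\bm a}(t)=\mathrm{TL}_{F,\bm v}(t)$ for all $t\in\mathbb Z_{\ge0}$, and $\mathrm{TL}_{F,\bm v}$ is not identically zero; (2) if there is no real $c>0$ with $-c\bm a\in N(P)$, then $\mathrm{TL}_{P,\bm v}(t)=\mathrm{TL}_{P,\bm v-\varepsilon\bm a}(t)$ for all $t\in\mathbb Z_{\ge0}$.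
   Context: $P=\bigcap_{i=1}^m\{\bm x:(\bm a_i,\bm x)\ge b_i\}$ is the unique irredundant presentation with $(\bm a_i,b_i)\in\mathbb Z^{d+1}$ primitive; $N(P)=\{\bm a_1,\dots,\bm a_m\}$, and the facet with normal $\bm a_i$ is $P\cap\{(\bm a_i,\bm x)=b_i\}$. $H_{\bm a,k}=\{\bm x:(\bm a,\bm x)=k\}$, $\mathcal A_P=\{H_{\bm a_i,k}:i\le m,k\in\mathbb Z\}$. $\mathrm{TL}_{X,\bm v}(t)=\#((tX+\bm v)\cap\mathbb Z^d)$. *)

theory Defs
  imports "HOL-Analysis.Analysis"
begin

definition int_vec :: "real^'n \<Rightarrow> bool" where
  "int_vec x \<longleftrightarrow> (\<forall>i. x $ i \<in> \<int>)"

definition rat_vec :: "real^'n \<Rightarrow> bool" where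
  "rat_vec x \<longleftrightarrow> (\<forall>i. x $ i \<in> \<rat>)"

definition rational_full_polytope :: "(real^'n) set \<Rightarrow> bool" where
  "rational_full_polytope P \<longleftrightarrow>
     (\<exists>V. finite V \<and> (\<forall>v\<in>V. rat_vec v) \<and> P = convex hull V) \<and>
     aff_dim P = int CARD('n)"

definition primitive_pair :: "real^'n \<Rightarrow> real \<Rightarrow> bool" where
  "primitive_pair a b \<longleftrightarrow> int_vec a \<and> b \<in> \<int> \<and>
     (\<forall>m::int. m > 1 \<longrightarrow> \<not> (b / of_int m \<in> \<int> \<and> (\<forall>i. a $ i / of_int m \<in> \<int>)))"

text \<open>(a,b) is one of the inequalities (a,x) \<ge> b of the unique irredundant
  presentation of P with primitive integer (a,b): it is valid on P and cuts out a facet.\<close>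
definition in_presentation :: "(real^'n) set \<Rightarrow> real^'n \<Rightarrow> real \<Rightarrow> bool" where
  "in_presentation P a b \<longleftrightarrow> primitive_pair a b \<and>
     P \<subseteq> {x. a \<bullet> x \<ge> b} \<and> (P \<inter> {x. a \<bullet> x = b}) facet_of P"

definition normals :: "(real^'n) set \<Rightarrow> (real^'n) set" where
  "normals P = {a. \<exists>b. in_presentation P a b}"

definition hyp :: "real^'n \<Rightarrow> real \<Rightarrow> (real^'n) set" where
  "hyp a k = {x. a \<bullet> x = k}"

definition arrangement :: "(real^'n) set \<Rightarrow> (real^'n) set set" where
  "arrangement P = {hyp a (of_int k) | a k. a \<in> normals P}"

definition TL :: "(real^'n) set \<Rightarrow> real^'n \<Rightarrow> nat \<Rightarrow> nat" where
  "TL X v t = card ((\<lambda>x. real t *\<^sub>R x + v) ` X \<inter> {z. int_vec z})"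

end

theory Submission
  imports Defs
begin

(* Write P as the solution set of its primitive facet inequalities (c, d) in Q. An integer point z
lies in tP + w iff t d + c.w <= c.z for all (c, d) in Q, and every c.z - t d is an integer. Moving v
by s a shifts each c.v by s (c.a); for small s this cannot change which integers lie above c.v unless
c.v is itself an integer, and by genericity of v this happens only for normals c parallel to a.
Hence moving towards +a removes exactly the lattice points on the hyperplane a.z = tb + k, which are
the lattice points of tF + v, while moving towards -a changes nothing if no facet normal is a
negative multiple of a. Finally, since (a, b) is primitive, the hyperplanes a.x = tb + k contain
lattice points for arbitrarily large t, with a covering radius independent of t; for large t one of
them lies in tF + v. *)

section \<open>Facet inequalities of rational polytopes\<close>

lemma det_in_Rats:
  fixes M :: "real^'n^'n"
  assumes "\<And>i j. M$i$j \<in> \<rat>"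
  shows "det M \<in> \<rat>"
  unfolding det_def using assms by (intro Rats_sum Rats_mult Rats_prod) auto

lemma rat_vec_diff: "rat_vec x \<Longrightarrow> rat_vec y \<Longrightarrow> rat_vec (x - y)"
  by (simp add: rat_vec_def Rats_diff)

lemma rat_vec_inner: "rat_vec x \<Longrightarrow> rat_vec y \<Longrightarrow> x \<bullet> y \<in> \<rat>"
  by (auto simp: rat_vec_def inner_vec_def intro!: Rats_sum Rats_mult)

lemma int_vec_inner: "int_vec x \<Longrightarrow> int_vec y \<Longrightarrow> x \<bullet> y \<in> \<int>"
  by (auto simp: int_vec_def inner_vec_def intro!: Ints_sum Ints_mult)

text \<open>The normal is the cofactor vector of a matrix whose other rows are the vectors of \<open>B\<close>.\<close>
lemma rational_normal_exists:
  fixes B :: "(real^'n) set"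
  assumes indep: "independent B" and cardB: "card B = CARD('n) - 1"
    and rat: "\<forall>w\<in>B. rat_vec w"
  shows "\<exists>c. rat_vec c \<and> c \<noteq> 0 \<and> (\<forall>w\<in>B. c \<bullet> w = 0)"
proof -
  have finB: "finite B" using indep finiteI_independent by blast
  fix i0 :: 'n
  have "card (UNIV - {i0}) = CARD('n) - 1" by (simp add: card_Diff_singleton)
  then obtain g where g: "bij_betw g (UNIV - {i0}) B"
    using finite_same_card_bij[of "UNIV - {i0}" B] finB cardB by auto
  define M where "M x = (\<chi> i. if i = i0 then x else g i)" for x :: "real^'n"
  define c where "c = (\<chi> j. det (M (axis j 1)))"
  have det_M: "det (M x) = c \<bullet> x" for x
  proof -
    have "det (M x) = det (\<chi> i. if i = i0 then sum (\<lambda>j. (x$j) *s axis j 1) UNIV else g i)"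
      by (simp only: M_def basis_expansion)
    also have "\<dots> = (\<Sum>j\<in>UNIV. det (\<chi> i. if i = i0 then (x$j) *s axis j 1 else g i))"
      by (rule det_linear_row_sum) simp
    also have "\<dots> = (\<Sum>j\<in>UNIV. x$j * c$j)"
      by (simp add: det_row_mul c_def M_def)
    finally show ?thesis by (simp add: inner_vec_def mult.commute)
  qed
  have "rat_vec c"
    unfolding rat_vec_def c_def
    using g rat by (auto intro!: det_in_Rats simp: M_def axis_def rat_vec_def bij_betw_def)
  moreover have "\<forall>w\<in>B. c \<bullet> w = 0"
  proof
    fix w assume "w \<in> B"
    then obtain i1 where i1: "i1 \<in> UNIV - {i0}" "g i1 = w"
      using g by (auto simp: bij_betw_def)
    have "det (M w) = 0"
      by (rule det_identical_rows[of i0 i1]) (use i1 in \<open>auto simp: M_def row_def vec_eq_iff\<close>)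
    then show "c \<bullet> w = 0" using det_M by simp
  qed
  moreover have "c \<noteq> 0"
  proof -
    have "span B \<noteq> UNIV"
    proof
      assume "span B = UNIV"
      then have "dim (UNIV :: (real^'n) set) = dim B" by (metis dim_span)
      then have "CARD('n) = card B" using indep dim_eq_card_independent by simp
      moreover have "CARD('n) > 0" by simp
      ultimately show False using cardB by linarith
    qed
    then obtain x where x: "x \<notin> span B" by auto
    have "rows (M x) = insert x B"
      using g unfolding rows_def row_def M_def bij_betw_def by (auto simp: vec_lambda_eta)
    moreover have "independent (insert x B)" using indep x by (simp add: independent_insert)
    ultimately have "rank (M x) = CARD('n)"
      by (metis row_rank_def dim_eq_card_independent cardB card_insert_disjoint finB x span_base
          Suc_pred' zero_less_card_finite finite_UNIV)
    then have "det (M x) \<noteq> 0" by (simp add: det_eq_0_rank)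
    then show ?thesis using det_M by auto
  qed
  ultimately show ?thesis by blast
qed

lemma orthogonal_complement_imp_parallel:
  fixes a c :: "'a::real_inner"
  assumes "a \<noteq> 0" "\<And>y. a \<bullet> y = 0 \<Longrightarrow> c \<bullet> y = 0"
  shows "c = ((c \<bullet> a) / (a \<bullet> a)) *\<^sub>R a"
proof -
  define w where "w = c - ((c \<bullet> a) / (a \<bullet> a)) *\<^sub>R a"
  have "a \<bullet> w = 0" using assms(1) by (simp add: w_def inner_diff_right inner_commute)
  then have "w \<bullet> w = 0" using assms(2) by (simp add: w_def inner_diff_left)
  then show ?thesis by (simp add: w_def)
qed

lemma facet_rational_normal:
  fixes P C :: "(real^'n) set"
  assumes V: "finite V" "\<forall>v\<in>V. rat_vec v" "P = convex hull V"
    and full: "aff_dim P = int CARD('n)"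
    and C: "C facet_of P" and \<alpha>: "\<alpha> \<noteq> 0" "C = P \<inter> {x. \<alpha> \<bullet> x = \<beta>}"
  shows "\<exists>l. l \<noteq> 0 \<and> rat_vec (l *\<^sub>R \<alpha>) \<and> l * \<beta> \<in> \<rat>"
proof -
  have "C face_of convex hull V" using C V by (simp add: facet_of_def)
  then obtain VC where VC: "VC \<subseteq> V" "C = convex hull VC"
    using face_of_convex_hull_subset[of V C] V finite_imp_compact by blast
  have "C \<noteq> {}" and affC: "aff_dim C = aff_dim P - 1" using C by (auto simp: facet_of_def)
  then obtain p1 where p1: "p1 \<in> VC" using VC by auto
  have p1C: "p1 \<in> C" using p1 VC hull_inc by auto
  have C_hyp: "C \<subseteq> {x. \<alpha> \<bullet> x = \<beta>}" using \<alpha> by auto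
  define W where "W = (\<lambda>x. x - p1) ` VC"
  have "aff_dim C = int (dim W)"
    unfolding VC(2) aff_dim_convex_hull W_def
    by (rule aff_dim_eq_dim_subtract) (use p1 in \<open>simp add: hull_inc\<close>)
  with affC full have dimW: "dim W = CARD('n) - 1" by simp
  obtain B where B: "B \<subseteq> W" "independent B" "W \<subseteq> span B" "card B = dim W"
    using basis_exists by blast
  have "\<forall>w\<in>B. rat_vec w"
    using B(1) VC(1) V(2) p1 by (auto simp: W_def intro!: rat_vec_diff)
  then obtain c where c: "rat_vec c" "c \<noteq> 0" "\<forall>w\<in>B. c \<bullet> w = 0"
    using rational_normal_exists[OF B(2)] B(4) dimW by auto
  have "W \<subseteq> {y. \<alpha> \<bullet> y = 0}"
  proof
    fix y assume "y \<in> W"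
    then obtain x where x: "x \<in> VC" "y = x - p1" by (auto simp: W_def)
    have "x \<in> C" using x(1) VC(2) hull_inc by auto
    then show "y \<in> {y. \<alpha> \<bullet> y = 0}" using x(2) C_hyp p1C by (auto simp: inner_diff_right)
  qed
  then have "span W \<subseteq> {y. \<alpha> \<bullet> y = 0}" by (simp add: span_minimal subspace_hyperplane)
  moreover have "dim {y. \<alpha> \<bullet> y = 0} \<le> dim (span W)"
    using dim_hyperplane[OF \<alpha>(1)] dimW by (simp add: dim_span)
  ultimately have "span W = {y. \<alpha> \<bullet> y = 0}"
    by (intro subspace_dim_equal subspace_span subspace_hyperplane)
  moreover have "span W \<subseteq> {y. c \<bullet> y = 0}"
  proof -
    have "span B \<subseteq> {y. c \<bullet> y = 0}"
      by (rule span_minimal) (use c in \<open>auto simp: subspace_hyperplane\<close>)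
    moreover have "span W \<subseteq> span B" using B(3) by (simp add: span_minimal)
    ultimately show ?thesis by blast
  qed
  ultimately have "\<And>y. \<alpha> \<bullet> y = 0 \<Longrightarrow> c \<bullet> y = 0" by blast
  then have c_eq: "c = ((c \<bullet> \<alpha>) / (\<alpha> \<bullet> \<alpha>)) *\<^sub>R \<alpha>" by (rule orthogonal_complement_imp_parallel[OF \<alpha>(1)])
  define l where "l = (c \<bullet> \<alpha>) / (\<alpha> \<bullet> \<alpha>)"
  have "l \<noteq> 0" using c_eq c(2) by (auto simp: l_def)
  moreover have "rat_vec (l *\<^sub>R \<alpha>)" using c_eq c(1) by (simp add: l_def)
  moreover have "l * \<beta> \<in> \<rat>"
  proof -
    have "c \<bullet> p1 = l * (\<alpha> \<bullet> p1)" using c_eq by (metis l_def inner_scaleR_left)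
    then have "l * \<beta> = c \<bullet> p1" using C_hyp p1C by auto
    then show ?thesis using rat_vec_inner c(1) p1 VC V(2) by auto
  qed
  ultimately show ?thesis by blast
qed

lemma rat_vec_clear_denominators:
  fixes c :: "real^'n" and d :: real
  assumes "rat_vec c" "d \<in> \<rat>"
  shows "\<exists>N::int. N > 0 \<and> int_vec (of_int N *\<^sub>R c) \<and> of_int N * d \<in> \<int>"
proof -
  have denom: "\<exists>q::int. q > 0 \<and> of_int q * x \<in> \<int>" if "x \<in> \<rat>" for x :: real
    using that by (elim Rats_cases') (auto intro!: exI)
  have "\<forall>i. \<exists>q::int. q > 0 \<and> of_int q * c$i \<in> \<int>"
    using denom assms(1) unfolding rat_vec_def by blast
  then obtain q where "\<forall>i. q i > 0 \<and> of_int (q i) * c$i \<in> \<int>" by (rule choice[THEN exE])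
  then have q: "\<And>i. q i > 0" "\<And>i. of_int (q i) * c$i \<in> \<int>" by auto
  obtain qd :: int where qd: "qd > 0" "of_int qd * d \<in> \<int>" using denom[OF assms(2)] by blast
  define N where "N = (\<Prod>i\<in>UNIV. q i) * qd"
  have "N > 0" using q qd by (simp add: N_def prod_pos)
  moreover have "of_int N * c$i \<in> \<int>" for i
  proof -
    have "N = q i * ((\<Prod>j\<in>UNIV-{i}. q j) * qd)"
      by (simp add: N_def prod.remove[of UNIV i])
    then have "of_int N * c$i = (of_int (q i) * c$i) * of_int ((\<Prod>j\<in>UNIV-{i}. q j) * qd)"
      by simp
    then show ?thesis using q(2)[of i] by (metis Ints_mult Ints_of_int)
  qed
  moreover have "of_int N * d \<in> \<int>"
  proof -
    have "of_int N * d = of_int (\<Prod>i\<in>UNIV. q i) * (of_int qd * d)" by (simp add: N_def)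
    then show ?thesis using qd by (metis Ints_mult Ints_of_int)
  qed
  ultimately show ?thesis by (intro exI[of _ N]) (auto simp: int_vec_def)
qed

lemma of_int_floor_Ints: "x \<in> \<int> \<Longrightarrow> of_int \<lfloor>x\<rfloor> = x"
  by (auto elim: Ints_cases)

lemma Ints_divide_of_int_iff:
  fixes x :: real
  assumes "x \<in> \<int>"
  shows "x / of_int m \<in> \<int> \<longleftrightarrow> m = 0 \<or> m dvd \<lfloor>x\<rfloor>"
proof -
  obtain n where "x = of_int n" using assms by (elim Ints_cases)
  then show ?thesis using of_int_div_of_int_in_Ints_iff[of n m] by simp
qed

definition pair_content :: "real^'n \<Rightarrow> real \<Rightarrow> int" where
  "pair_content a b = Gcd (insert \<lfloor>b\<rfloor> (range (\<lambda>j. \<lfloor>a$j\<rfloor>)))"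

lemma pair_content_dvd:
  shows "pair_content a b dvd \<lfloor>b\<rfloor>" and "pair_content a b dvd \<lfloor>a$j\<rfloor>"
  unfolding pair_content_def by (rule Gcd_dvd; simp)+

lemma pair_content_greatest:
  "d dvd \<lfloor>b\<rfloor> \<Longrightarrow> (\<And>j. d dvd \<lfloor>a$j\<rfloor>) \<Longrightarrow> d dvd pair_content a b"
  unfolding pair_content_def by (rule Gcd_greatest) auto

lemma pair_content_pos:
  fixes a :: "real^'n" and b :: real
  assumes "int_vec a" "a \<noteq> 0"
  shows "pair_content a b > 0"
proof -
  have "pair_content a b \<noteq> 0"
  proof
    assume "pair_content a b = 0"
    then have "\<lfloor>a$j\<rfloor> = 0" for j by (auto simp: pair_content_def Gcd_0_iff)
    then have "a$j = 0" for j
      using of_int_floor_Ints[of "a$j"] assms(1) by (simp add: int_vec_def)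
    then show False using assms(2) by (simp add: vec_eq_iff)
  qed
  then show ?thesis by (simp add: pair_content_def order_neq_le_trans)
qed

lemma primitive_pair_content:
  fixes a :: "real^'n" and b :: real
  assumes "primitive_pair a b" "a \<noteq> 0"
  shows "pair_content a b = 1"
proof -
  have ints: "int_vec a" "b \<in> \<int>" using assms(1) by (auto simp: primitive_pair_def)
  have "\<not> pair_content a b > 1"
  proof
    assume "pair_content a b > 1"
    moreover have "b / of_int (pair_content a b) \<in> \<int>" "\<And>j. a$j / of_int (pair_content a b) \<in> \<int>"
      using ints by (auto simp: Ints_divide_of_int_iff pair_content_dvd int_vec_def)
    ultimately show False using assms(1) by (auto simp: primitive_pair_def)
  qed
  then show ?thesis using pair_content_pos[OF ints(1) assms(2), of b] by linarith
qed

lemma primitive_multiple_exists: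
  fixes a :: "real^'n" and b :: real
  assumes a: "int_vec a" "a \<noteq> 0" and b: "b \<in> \<int>"
  shows "\<exists>s>0. primitive_pair (s *\<^sub>R a) (s * b)"
proof -
  define G where "G = pair_content a b"
  have G: "G > 0" using pair_content_pos[OF a, of b] by (simp add: G_def)
  have ints: "\<And>j. a$j \<in> \<int>" using a(1) by (auto simp: int_vec_def)
  define s :: real where "s = 1 / of_int G"
  have "primitive_pair (s *\<^sub>R a) (s * b)"
    unfolding primitive_pair_def
  proof (intro conjI allI impI notI)
    show "int_vec (s *\<^sub>R a)" "s * b \<in> \<int>"
      using ints b by (auto simp: int_vec_def s_def Ints_divide_of_int_iff G_def pair_content_dvd)
    fix m :: int assume m: "m > 1"
      and "s * b / of_int m \<in> \<int> \<and> (\<forall>i. (s *\<^sub>R a) $ i / of_int m \<in> \<int>)"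
    then have "b / of_int (G * m) \<in> \<int>" "\<And>i. a$i / of_int (G * m) \<in> \<int>"
      by (auto simp: s_def)
    then have "G * m dvd \<lfloor>b\<rfloor>" "\<And>i. G * m dvd \<lfloor>a$i\<rfloor>"
      using Ints_divide_of_int_iff[OF b, of "G * m"] Ints_divide_of_int_iff[OF ints, of _ "G * m"] G m
      by auto
    then have "G * m dvd G * 1" unfolding G_def by (simp add: pair_content_greatest)
    then have "m dvd 1" using G by (simp only: dvd_times_left_cancel_iff)
    then show False using m by (simp add: zdvd1_eq)
  qed
  moreover have "s > 0" using G by (simp add: s_def)
  ultimately show ?thesis by blast
qed

lemma in_presentationD:
  assumes "in_presentation P a b"
  shows "int_vec a" "b \<in> \<int>" "a \<noteq> 0" "\<exists>y\<in>P. a \<bullet> y = b" "P \<subseteq> {x. b \<le> a \<bullet> x}"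
proof -
  have "primitive_pair a b" and sub: "P \<subseteq> {x. a \<bullet> x \<ge> b}"
    and fac: "(P \<inter> {x. a \<bullet> x = b}) facet_of P"
    using assms by (auto simp: in_presentation_def)
  then show "int_vec a" "b \<in> \<int>" "P \<subseteq> {x. b \<le> a \<bullet> x}" by (auto simp: primitive_pair_def)
  have ne: "P \<inter> {x. a \<bullet> x = b} \<noteq> {}" using fac by (simp add: facet_of_def)
  then show "\<exists>y\<in>P. a \<bullet> y = b" by auto
  show "a \<noteq> 0"
  proof
    assume "a = 0"
    then have "P \<inter> {x. a \<bullet> x = b} = P" using ne by auto
    then show False using fac by simp
  qed
qed

lemma facet_in_presentation:
  fixes P :: "(real^'n) set"
  assumes P: "rational_full_polytope P" and \<alpha>: "\<alpha> \<noteq> 0" "P \<subseteq> {x. \<alpha> \<bullet> x \<le> \<beta>}"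
    and facet: "(P \<inter> {x. \<alpha> \<bullet> x = \<beta>}) facet_of P"
  shows "\<exists>\<mu><0. in_presentation P (\<mu> *\<^sub>R \<alpha>) (\<mu> * \<beta>)"
proof -
  obtain V where V: "finite V" "\<forall>v\<in>V. rat_vec v" "P = convex hull V"
    and full: "aff_dim P = int CARD('n)"
    using P by (auto simp: rational_full_polytope_def)
  obtain l where l: "l \<noteq> 0" "rat_vec (l *\<^sub>R \<alpha>)" "l * \<beta> \<in> \<rat>"
    using facet_rational_normal[OF V full facet \<alpha>(1) refl] by blast
  define \<kappa> where "\<kappa> = - \<bar>l\<bar>"
  have \<kappa>: "\<kappa> < 0" "rat_vec (\<kappa> *\<^sub>R \<alpha>)" "\<kappa> * \<beta> \<in> \<rat>"
    using l by (auto simp: \<kappa>_def rat_vec_def abs_if)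
  obtain N :: int where N: "N > 0" "int_vec (of_int N *\<^sub>R (\<kappa> *\<^sub>R \<alpha>))" "of_int N * (\<kappa> * \<beta>) \<in> \<int>"
    using rat_vec_clear_denominators[OF \<kappa>(2,3)] by blast
  have "of_int N *\<^sub>R (\<kappa> *\<^sub>R \<alpha>) \<noteq> 0" using N(1) \<kappa>(1) \<alpha>(1) by simp
  then obtain s where s: "s > 0"
    "primitive_pair (s *\<^sub>R (of_int N *\<^sub>R (\<kappa> *\<^sub>R \<alpha>))) (s * (of_int N * (\<kappa> * \<beta>)))"
    using primitive_multiple_exists[OF N(2) _ N(3)] by blast
  define \<mu> where "\<mu> = s * of_int N * \<kappa>"
  have \<mu>: "\<mu> < 0" using s N \<kappa> by (simp add: \<mu>_def mult_pos_neg)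
  have "primitive_pair (\<mu> *\<^sub>R \<alpha>) (\<mu> * \<beta>)" using s(2) by (simp add: \<mu>_def mult.assoc)
  moreover have "P \<subseteq> {x. (\<mu> *\<^sub>R \<alpha>) \<bullet> x \<ge> \<mu> * \<beta>}"
    using \<alpha>(2) \<mu> by (auto simp: mult_le_cancel_left)
  moreover have "P \<inter> {x. (\<mu> *\<^sub>R \<alpha>) \<bullet> x = \<mu> * \<beta>} = P \<inter> {x. \<alpha> \<bullet> x = \<beta>}"
    using \<mu> by auto
  ultimately have "in_presentation P (\<mu> *\<^sub>R \<alpha>) (\<mu> * \<beta>)"
    using facet by (simp add: in_presentation_def)
  with \<mu> show ?thesis by blast
qed

lemma rational_full_polytope_presentation:
  fixes P :: "(real^'n) set"
  assumes P: "rational_full_polytope P"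
  shows "\<exists>Q. finite Q \<and> (\<forall>(c,d)\<in>Q. in_presentation P c d) \<and> P = {x. \<forall>(c,d)\<in>Q. d \<le> c \<bullet> x}"
proof -
  obtain V where V: "finite V" "P = convex hull V" and full: "aff_dim P = int CARD('n)"
    using P by (auto simp: rational_full_polytope_def)
  have "polytope P" using V by (auto simp: polytope_def)
  then have "polyhedron P" by (rule polytope_imp_polyhedron)
  then obtain F where F: "finite F" "P = affine hull P \<inter> \<Inter>F"
    and "\<And>h. h \<in> F \<Longrightarrow> \<exists>a b. a \<noteq> 0 \<and> h = {x. a \<bullet> x \<le> b}"
    and minimal: "\<And>F'. F' \<subset> F \<Longrightarrow> P \<subset> (affine hull P) \<inter> \<Inter>F'"
    by (simp add: polyhedron_Int_affine_minimal) meson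
  then obtain \<alpha> \<beta> where \<alpha>\<beta>: "\<And>h. h \<in> F \<Longrightarrow> \<alpha> h \<noteq> 0 \<and> h = {x. \<alpha> h \<bullet> x \<le> \<beta> h}"
    by metis
  have "affine hull P = UNIV" using full aff_dim_eq_full[of P] by simp
  then have P_eq: "P = \<Inter>F" using F(2) by simp
  have "\<exists>\<mu><0. in_presentation P (\<mu> *\<^sub>R \<alpha> h) (\<mu> * \<beta> h)" if h: "h \<in> F" for h
  proof (rule facet_in_presentation[OF P])
    show "\<alpha> h \<noteq> 0" "P \<subseteq> {x. \<alpha> h \<bullet> x \<le> \<beta> h}" using P_eq h \<alpha>\<beta> by blast+
    show "(P \<inter> {x. \<alpha> h \<bullet> x = \<beta> h}) facet_of P"
      using facet_of_polyhedron_explicit[OF F \<alpha>\<beta> minimal] h by blast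
  qed
  then obtain \<mu> where \<mu>: "\<And>h. h \<in> F \<Longrightarrow> \<mu> h < 0 \<and> in_presentation P (\<mu> h *\<^sub>R \<alpha> h) (\<mu> h * \<beta> h)"
    by metis
  define Q where "Q = (\<lambda>h. (\<mu> h *\<^sub>R \<alpha> h, \<mu> h * \<beta> h)) ` F"
  have "x \<in> h \<longleftrightarrow> \<mu> h * \<beta> h \<le> (\<mu> h *\<^sub>R \<alpha> h) \<bullet> x" if "h \<in> F" for h x
    using \<mu>[OF that] \<alpha>\<beta>[OF that] by (auto simp: mult_le_cancel_left)
  then have "P = {x. \<forall>(c,d)\<in>Q. d \<le> c \<bullet> x}"
    unfolding P_eq Q_def by blast
  moreover have "finite Q" "\<forall>(c,d)\<in>Q. in_presentation P c d" using F(1) \<mu> by (auto simp: Q_def)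
  ultimately show ?thesis by blast
qed

lemma rational_full_polytope_bounded: "rational_full_polytope P \<Longrightarrow> bounded P"
  by (auto simp: rational_full_polytope_def polytope_def intro!: polytope_imp_bounded)

section \<open>Lattice points on facet hyperplanes\<close>

lemma finite_int_vec_bounded:
  fixes S :: "(real^'n) set"
  assumes "bounded S"
  shows "finite (S \<inter> {z. int_vec z})"
proof -
  obtain r where r: "\<And>x. x \<in> S \<Longrightarrow> norm x \<le> r" using assms by (auto simp: bounded_iff)
  define R where "R = \<lceil>r\<rceil>"
  have "S \<inter> {z. int_vec z} \<subseteq> (\<lambda>f. \<chi> i. of_int (f i)) ` (\<Pi>\<^sub>E i\<in>UNIV. {-R..R})"
  proof
    fix z assume z: "z \<in> S \<inter> {z. int_vec z}"
    define f where "f i = \<lfloor>z$i\<rfloor>" for i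
    have zf: "of_int (f i) = z$i" for i using z of_int_floor_Ints by (auto simp: f_def int_vec_def)
    have "\<bar>of_int (f i)\<bar> \<le> (of_int R :: real)" for i
      using z r[of z] component_le_norm_cart[of z i] zf[of i] by (simp add: R_def) linarith
    then have "\<bar>f i\<bar> \<le> R" for i by (metis of_int_abs of_int_le_iff)
    then have "f i \<in> {-R..R}" for i by (meson abs_le_D1 abs_le_D2 atLeastAtMost_iff minus_le_iff)
    then have "f \<in> (\<Pi>\<^sub>E i\<in>UNIV. {-R..R})" by auto
    moreover have "z = (\<chi> i. of_int (f i))" using zf by (simp add: vec_eq_iff)
    ultimately show "z \<in> (\<lambda>f. \<chi> i. of_int (f i)) ` (\<Pi>\<^sub>E i\<in>UNIV. {-R..R})" by blast
  qed
  moreover have "finite (\<Pi>\<^sub>E i\<in>(UNIV::'n set). {-R..R})" by (intro finite_PiE) auto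
  ultimately show ?thesis by (meson finite_imageI finite_subset)
qed

lemma finite_dilate_int_vec:
  fixes S :: "(real^'n) set"
  assumes "bounded S"
  shows "finite ((\<lambda>x. c *\<^sub>R x + w) ` S \<inter> {z. int_vec z})"
proof -
  have "(\<lambda>x. c *\<^sub>R x + w) ` S = (+) w ` ((*\<^sub>R) c ` S)" by (auto simp: image_image add.commute)
  then show ?thesis
    using assms by (simp add: finite_int_vec_bounded bounded_scaling bounded_translation)
qed

lemma bezout_Gcd_insert_image:
  fixes f :: "'a \<Rightarrow> int"
  assumes "finite J"
  shows "\<exists>g h. (\<Sum>j\<in>J. g j * f j) + h * c = Gcd (insert c (f ` J))"
  using assms
proof (induction J rule: finite_induct)
  case empty
  have "sgn c * c = \<bar>c\<bar>" by (metis abs_sgn mult.commute)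
  then show ?case by (intro exI[of _ "\<lambda>_. 0"] exI[of _ "sgn c"]) simp
next
  case (insert x J)
  then obtain g h where gh: "(\<Sum>j\<in>J. g j * f j) + h * c = Gcd (insert c (f ` J))" by blast
  obtain u w where uw: "u * f x + w * Gcd (insert c (f ` J)) = gcd (f x) (Gcd (insert c (f ` J)))"
    using bezout_int by blast
  define g' where "g' = (\<lambda>j. if j = x then u else w * g j)"
  have "(\<Sum>j\<in>insert x J. g' j * f j) = u * f x + (\<Sum>j\<in>J. w * (g j * f j))"
    using insert by (simp add: g'_def) (intro sum.cong, auto)
  then have "(\<Sum>j\<in>insert x J. g' j * f j) + (w * h) * c = u * f x + w * ((\<Sum>j\<in>J. g j * f j) + h * c)"
    by (simp add: sum_distrib_left algebra_simps)
  also have "\<dots> = gcd (f x) (Gcd (insert c (f ` J)))" by (simp only: gh uw)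
  also have "\<dots> = Gcd (insert c (f ` insert x J))" by (simp add: gcd.left_commute)
  finally show ?case by blast
qed

lemma primitive_hyperplane_lattice_point:
  fixes a :: "real^'n" and b :: real and k :: int
  assumes "primitive_pair a b" "a \<noteq> 0"
  shows "\<exists>t\<ge>N. \<exists>z. int_vec z \<and> a \<bullet> z = real t * b + of_int k"
proof -
  define A where "A j = \<lfloor>a$j\<rfloor>" for j
  define B where "B = \<lfloor>b\<rfloor>"
  have aA: "a$j = of_int (A j)" for j
    using assms(1) of_int_floor_Ints by (auto simp: A_def primitive_pair_def int_vec_def)
  have bB: "b = of_int B" using assms(1) of_int_floor_Ints by (auto simp: B_def primitive_pair_def)
  obtain g h where gh: "(\<Sum>j\<in>UNIV. g j * A j) + h * B = 1"
    using bezout_Gcd_insert_image[of UNIV A B] primitive_pair_content[OF assms]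
    by (auto simp: pair_content_def A_def B_def)
  obtain j0 where j0: "A j0 \<noteq> 0" using assms(2) aA by (metis of_int_0 vec_eq_iff zero_index)
  define n where "n = (int N + \<bar>k * h\<bar>) * sgn (A j0)"
  define t where "t = n * A j0 - k * h"
  have "n * A j0 = (int N + \<bar>k * h\<bar>) * \<bar>A j0\<bar>" by (simp add: n_def abs_sgn mult_ac)
  moreover have "1 \<le> \<bar>A j0\<bar>" using j0 by linarith
  then have "int N + \<bar>k * h\<bar> \<le> (int N + \<bar>k * h\<bar>) * \<bar>A j0\<bar>"
    using mult_left_mono[of 1 "\<bar>A j0\<bar>" "int N + \<bar>k * h\<bar>"] by simp
  ultimately have t: "t \<ge> int N" by (simp add: t_def)
  define z :: "real^'n" where "z = (\<chi> j. of_int (k * g j)) + of_int (n * B) *\<^sub>R axis j0 1"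
  have "a \<bullet> (\<chi> j. of_int (k * g j)) = of_int (k * (\<Sum>j\<in>UNIV. g j * A j))"
    by (simp add: inner_vec_def aA sum_distrib_left mult_ac)
  then have "a \<bullet> z = of_int (k * (\<Sum>j\<in>UNIV. g j * A j) + n * B * A j0)"
    by (simp add: z_def inner_add_right inner_axis aA)
  also have "k * (\<Sum>j\<in>UNIV. g j * A j) + n * B * A j0 = t * B + k"
  proof -
    have sum_eq: "(\<Sum>j\<in>UNIV. g j * A j) = 1 - h * B" using gh by linarith
    show ?thesis unfolding sum_eq t_def by (simp add: algebra_simps)
  qed
  finally have "a \<bullet> z = of_int t * b + of_int k" by (simp add: bB)
  moreover have "int_vec z" by (simp add: int_vec_def z_def axis_def)
  ultimately show ?thesis using t by (intro exI[of _ "nat t"]) auto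
qed

text \<open>The integer vectors \<open>a$j0 e\<^sub>i - a$i e\<^sub>j\<^sub>0\<close> span the hyperplane \<open>a\<bullet>y = 0\<close>, so every point of a
  lattice-containing hyperplane is within a fixed distance of one of its lattice points.\<close>
lemma hyperplane_lattice_covering:
  fixes a :: "real^'n"
  assumes a: "int_vec a" "a \<noteq> 0"
  obtains R where "\<And>p z. int_vec z \<Longrightarrow> a \<bullet> p = a \<bullet> z \<Longrightarrow>
    \<exists>z'. int_vec z' \<and> a \<bullet> z' = a \<bullet> z \<and> dist p z' \<le> R"
proof -
  obtain j0 where j0: "a$j0 \<noteq> 0" using a(2) by (metis vec_eq_iff zero_index)
  define w where "w i = a$j0 *\<^sub>R axis i 1 - a$i *\<^sub>R axis j0 (1::real)" for i
  have aw: "a \<bullet> w i = 0" for i by (simp add: w_def inner_diff_right inner_axis mult.commute)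
  have w_comp: "w i $ l = (if l = i then a$j0 else 0) - (if l = j0 then a$i else 0)" for i l
    by (simp add: w_def axis_def)
  have "\<exists>z'. int_vec z' \<and> a \<bullet> z' = a \<bullet> z \<and> dist p z' \<le> (\<Sum>i\<in>UNIV. norm (w i))"
    if z: "int_vec z" and apz: "a \<bullet> p = a \<bullet> z" for p z
  proof -
    define y where "y = p - z"
    define c where "c i = y$i / a$j0" for i
    have sum_c: "(\<Sum>i\<in>UNIV. c i * a$i) = 0"
    proof -
      have "(\<Sum>i\<in>UNIV. c i * a$i) = (a \<bullet> y) / a$j0"
        by (simp add: c_def inner_vec_def sum_divide_distrib mult.commute)
      then show ?thesis using apz by (simp add: y_def inner_diff_right)
    qed
    have y_eq: "y = (\<Sum>i\<in>UNIV. c i *\<^sub>R w i)"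
    proof (subst vec_eq_iff, intro allI)
      fix l
      have "(\<Sum>i\<in>UNIV. c i *\<^sub>R w i) $ l = (\<Sum>i\<in>UNIV. c i * w i $ l)"
        by (simp add: sum_component)
      also have "\<dots> = (\<Sum>i\<in>UNIV. (if l = i then c i * a$j0 else 0) - (if l = j0 then c i * a$i else 0))"
        by (intro sum.cong) (auto simp: w_comp)
      also have "\<dots> = c l * a$j0 - (if l = j0 then (\<Sum>i\<in>UNIV. c i * a$i) else 0)"
        by (cases "l = j0") (simp_all add: sum_subtractf)
      also have "\<dots> = y $ l" using j0 sum_c by (simp add: c_def)
      finally show "y $ l = (\<Sum>i\<in>UNIV. c i *\<^sub>R w i) $ l" by simp
    qed
    define z' where "z' = z + (\<Sum>i\<in>UNIV. of_int \<lfloor>c i\<rfloor> *\<^sub>R w i)"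
    have "int_vec z'"
      using z a(1) unfolding int_vec_def
      by (auto simp: z'_def sum_component w_comp intro!: Ints_add Ints_sum Ints_mult Ints_diff)
    moreover have "a \<bullet> z' = a \<bullet> z" by (simp add: z'_def aw inner_add_right inner_sum_right)
    moreover have "dist p z' \<le> (\<Sum>i\<in>UNIV. norm (w i))"
    proof -
      have diff: "p - z' = (\<Sum>i\<in>UNIV. (c i - of_int \<lfloor>c i\<rfloor>) *\<^sub>R w i)"
        by (simp add: z'_def y_def[symmetric] y_eq[symmetric] diff_diff_eq[symmetric]
            sum_subtractf scaleR_diff_left)
      have "dist p z' \<le> (\<Sum>i\<in>UNIV. norm ((c i - of_int \<lfloor>c i\<rfloor>) *\<^sub>R w i))"
        unfolding dist_norm diff by (rule norm_sum)
      also have "\<dots> \<le> (\<Sum>i\<in>UNIV. norm (w i))"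
      proof (rule sum_mono)
        fix i
        have "0 \<le> c i - of_int \<lfloor>c i\<rfloor>" "c i - of_int \<lfloor>c i\<rfloor> \<le> 1" by linarith+
        then show "norm ((c i - of_int \<lfloor>c i\<rfloor>) *\<^sub>R w i) \<le> norm (w i)"
          by (simp add: mult_left_le_one_le)
      qed
      finally show ?thesis .
    qed
    ultimately show ?thesis by blast
  qed
  then show ?thesis using that by blast
qed

lemma affine_hull_facet_hyperplane:
  fixes P :: "(real^'n) set"
  assumes "aff_dim P = int CARD('n)" "(P \<inter> {x. a \<bullet> x = b}) facet_of P" "a \<noteq> 0"
  shows "affine hull (P \<inter> {x. a \<bullet> x = b}) = {x. a \<bullet> x = b}"
proof -
  have "aff_dim (P \<inter> {x. a \<bullet> x = b}) = aff_dim {x. a \<bullet> x = b}"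
    using assms by (simp add: facet_of_def)
  then have "affine hull (P \<inter> {x. a \<bullet> x = b}) = affine hull {x. a \<bullet> x = b}"
    using aff_dim_eq_full_gen[of "P \<inter> {x. a \<bullet> x = b}"] by blast
  then show ?thesis by (simp add: affine_hull_eq affine_hyperplane)
qed

lemma TL_facet_nonzero:
  fixes P :: "(real^'n) set"
  assumes P: "rational_full_polytope P" and pres: "in_presentation P a b" and av: "a \<bullet> v = of_int k"
  shows "\<exists>t. TL (P \<inter> hyp a b) v t \<noteq> 0"
proof -
  define F where "F = P \<inter> hyp a b"
  have bounded_F: "bounded F" using rational_full_polytope_bounded[OF P] by (simp add: F_def bounded_Int)
  have facet: "F facet_of P" using pres by (simp add: F_def in_presentation_def hyp_def)
  have a: "int_vec a" "a \<noteq> 0" and pp: "primitive_pair a b"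
    using in_presentationD[OF pres] pres by (auto simp: in_presentation_def)
  have F_hyp: "F \<subseteq> {x. a \<bullet> x = b}" by (auto simp: F_def hyp_def)
  have aff_F: "affine hull F = {x. a \<bullet> x = b}"
    using affine_hull_facet_hyperplane[OF _ facet[unfolded F_def hyp_def] a(2)] P
    by (simp add: F_def hyp_def rational_full_polytope_def)
  have "F \<noteq> {}" "convex F" using facet by (auto simp: facet_of_def face_of_imp_convex)
  then obtain q where "q \<in> rel_interior F" using rel_interior_eq_empty by blast
  then obtain r where r: "r > 0" "cball q r \<inter> affine hull F \<subseteq> F" "q \<in> F"
    by (auto simp: mem_rel_interior_cball)
  obtain R where R: "\<And>p z. int_vec z \<Longrightarrow> a \<bullet> p = a \<bullet> z \<Longrightarrow>
      \<exists>z'. int_vec z' \<and> a \<bullet> z' = a \<bullet> z \<and> dist p z' \<le> R"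
    using hyperplane_lattice_covering[OF a] by blast
  obtain t z where t: "t \<ge> nat \<lceil>R / r\<rceil> + 1" and z: "int_vec z" "a \<bullet> z = real t * b + of_int k"
    using primitive_hyperplane_lattice_point[OF pp a(2)] by blast
  have t_pos: "real t > 0" using t by simp
  have "R / r < real t" using t by linarith
  then have R_lt: "R < real t * r" using r(1) by (simp add: divide_less_eq mult.commute)
  have "a \<bullet> (real t *\<^sub>R q + v) = a \<bullet> z" using r(3) F_hyp av z(2) by (auto simp: inner_add_right)
  then obtain z' where z': "int_vec z'" "a \<bullet> z' = a \<bullet> z" "dist (real t *\<^sub>R q + v) z' \<le> R"
    using R[OF z(1)] by blast
  define x where "x = inverse (real t) *\<^sub>R (z' - v)"
  have z'_x: "z' = real t *\<^sub>R x + v" using t_pos by (simp add: x_def)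
  have "a \<bullet> x = b" using z'(2) z(2) av t_pos by (simp add: x_def inner_diff_right field_simps)
  moreover have "dist q x \<le> r"
  proof -
    have "dist (real t *\<^sub>R q + v) z' = real t * dist q x"
      by (simp add: z'_x dist_norm scaleR_diff_right[symmetric])
    then have "real t * dist q x < real t * r" using z'(3) R_lt by linarith
    then show ?thesis using t_pos by simp
  qed
  ultimately have "x \<in> F" using r(2) aff_F by (auto simp: dist_commute)
  then have "z' \<in> (\<lambda>x. real t *\<^sub>R x + v) ` F \<inter> {z. int_vec z}" using z'_x z'(1) by blast
  then have "TL F v t \<noteq> 0"
    using finite_dilate_int_vec[OF bounded_F] by (auto simp: TL_def card_eq_0_iff)
  then show ?thesis by (auto simp: F_def)
qed

section \<open>Lattice points of dilates as integer solutions\<close>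

lemma bounded_ray_imp_zero:
  fixes S :: "'a::real_normed_vector set"
  assumes "bounded S" and ray: "\<And>s. s \<ge> 0 \<Longrightarrow> x + s *\<^sub>R y \<in> S"
  shows "y = 0"
proof (rule ccontr)
  assume "y \<noteq> 0"
  obtain M where M: "\<And>u. u \<in> S \<Longrightarrow> norm u \<le> M" using assms(1) by (auto simp: bounded_iff)
  define s where "s = (M + norm x + 1) / norm y"
  have "norm x \<le> M" using M[OF ray[of 0]] by simp
  then have "M + norm x + 1 > 0" using norm_ge_zero[of x] by linarith
  then have "s \<ge> 0" "norm (s *\<^sub>R y) = M + norm x + 1"
    using \<open>y \<noteq> 0\<close> by (auto simp: s_def)
  moreover have "norm (s *\<^sub>R y) \<le> norm (x + s *\<^sub>R y) + norm x"
    by (metis add_diff_cancel_left' norm_triangle_ineq4 add.commute)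
  ultimately show False using M[OF ray] by fastforce
qed

text \<open>For \<open>t = 0\<close> the right-hand side forces \<open>z = w\<close> because a bounded polyhedron has no recession
  direction.\<close>
lemma dilate_mem_iff:
  fixes S :: "'a::real_inner set"
  assumes S: "S = {x. \<forall>(c,d)\<in>Q. d \<le> c \<bullet> x}" "bounded S" "S \<noteq> {}" and "t \<ge> 0"
  shows "z \<in> (\<lambda>x. t *\<^sub>R x + w) ` S \<longleftrightarrow> (\<forall>(c,d)\<in>Q. t * d + c \<bullet> w \<le> c \<bullet> z)"
proof (cases "t = 0")
  case True
  obtain x where x: "x \<in> S" using S(3) by blast
  have "z = w" if "\<forall>(c,d)\<in>Q. c \<bullet> w \<le> c \<bullet> z"
  proof -
    have "x + s *\<^sub>R (z - w) \<in> S" if "s \<ge> 0" for s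
      using x \<open>s \<ge> 0\<close> \<open>\<forall>(c,d)\<in>Q. c \<bullet> w \<le> c \<bullet> z\<close> unfolding S(1)
      by (fastforce simp: inner_add_right inner_diff_right intro: add_increasing2 mult_nonneg_nonneg)
    then show ?thesis using bounded_ray_imp_zero[OF S(2)] by fastforce
  qed
  then show ?thesis using True x by auto
next
  case False
  then have t: "t > 0" using \<open>t \<ge> 0\<close> by simp
  have "z \<in> (\<lambda>x. t *\<^sub>R x + w) ` S \<longleftrightarrow> inverse t *\<^sub>R (z - w) \<in> S"
    using t by (auto simp: image_iff intro!: bexI[of _ "inverse t *\<^sub>R (z - w)"])
  also have "\<dots> \<longleftrightarrow> (\<forall>(c,d)\<in>Q. t * d + c \<bullet> w \<le> c \<bullet> z)"
    using t by (auto simp: S(1) inner_diff_right field_simps split: prod.splits)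
  finally show ?thesis .
qed

lemma TL_eq_card_constraints:
  fixes S :: "(real^'n) set"
  assumes "S = {x. \<forall>(c,d)\<in>Q. d \<le> c \<bullet> x}" "bounded S" "S \<noteq> {}"
  shows "TL S w t = card {z. int_vec z \<and> (\<forall>(c,d)\<in>Q. real t * d + c \<bullet> w \<le> c \<bullet> z)}"
proof -
  have "(\<lambda>x. real t *\<^sub>R x + w) ` S \<inter> {z. int_vec z}
      = {z. int_vec z \<and> (\<forall>(c,d)\<in>Q. real t * d + c \<bullet> w \<le> c \<bullet> z)}"
    using dilate_mem_iff[OF assms of_nat_0_le_iff[of t], where w = w] by blast
  then show ?thesis by (simp add: TL_def)
qed

section \<open>Perturbing the translation vector\<close>

text \<open>The distance from \<open>r\<close> to the nearest integer, except that it is \<open>1\<close> at integers: below this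
  bound a perturbation of an integer \<open>r\<close> still stays strictly between \<open>r - 1\<close> and \<open>r + 1\<close>.\<close>
definition int_gap :: "real \<Rightarrow> real" where
  "int_gap r = (if r \<in> \<int> then 1 else min (frac r) (1 - frac r))"

lemma int_gap_pos: "int_gap r > 0"
  using frac_lt_1[of r] frac_ge_0[of r] frac_eq_0_iff[of r] by (auto simp: int_gap_def)

lemma Ints_le_perturb_iff:
  fixes m r x :: real
  assumes m: "m \<in> \<int>" and x: "\<bar>x\<bar> < int_gap r"
  shows "r + x \<le> m \<longleftrightarrow> (if r \<in> \<int> \<and> 0 < x then r < m else r \<le> m)"
proof (cases "r \<in> \<int>")
  case True
  then obtain n where n: "m - r = of_int n" using m by (metis Ints_cases Ints_diff)
  have "n \<le> -1 \<or> n = 0 \<or> n \<ge> 1" by linarith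
  then have "m - r \<le> -1 \<or> m - r = 0 \<or> m - r \<ge> 1" unfolding n by auto
  moreover have "\<bar>x\<bar> < 1" using x True by (simp add: int_gap_def)
  ultimately show ?thesis using True by auto
next
  case False
  then have "\<bar>x\<bar> < frac r" "\<bar>x\<bar> < 1 - frac r" using x by (auto simp: int_gap_def)
  then have bounds: "of_int \<lfloor>r\<rfloor> < r + x" "r + x < of_int \<lfloor>r\<rfloor> + 1"
    "of_int \<lfloor>r\<rfloor> < r" "r < of_int \<lfloor>r\<rfloor> + 1"
    by (auto simp: frac_def)
  obtain n where "m = of_int n" using m by (elim Ints_cases)
  then have "m \<le> of_int \<lfloor>r\<rfloor> \<or> m \<ge> of_int \<lfloor>r\<rfloor> + 1" by (cases "n \<le> \<lfloor>r\<rfloor>") auto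
  then have "r + x \<le> m \<longleftrightarrow> r \<le> m" using bounds by (elim disjE) linarith+
  then show ?thesis using False by simp
qed

lemma in_presentation_pos_multiple:
  assumes "in_presentation P a b" "in_presentation P (l *\<^sub>R a) d" "0 < l"
  shows "d = l * b"
proof -
  obtain x where x: "x \<in> P" "a \<bullet> x = b" using in_presentationD(4)[OF assms(1)] by blast
  obtain y where y: "y \<in> P" "l * (a \<bullet> y) = d" using in_presentationD(4)[OF assms(2)] by auto
  have "b \<le> a \<bullet> y" using in_presentationD(5)[OF assms(1)] y(1) by auto
  then have "l * b \<le> d" using mult_left_mono[of b "a \<bullet> y" l] y(2) assms(3) by simp
  moreover have "d \<le> l * b" using in_presentationD(5)[OF assms(2)] x by auto
  ultimately show ?thesis by simp
qed

lemma generic_normal_parallel: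
  fixes P :: "(real^'n) set"
  assumes c: "c \<in> normals P" and "c \<bullet> v \<in> \<int>" and a: "a \<noteq> 0" and v: "v \<in> hyp a (of_int k)"
    and generic: "\<forall>H\<in>arrangement P. H \<noteq> hyp a (of_int k) \<longrightarrow> v \<notin> H"
  shows "c = ((c \<bullet> a) / (a \<bullet> a)) *\<^sub>R a"
proof (rule orthogonal_complement_imp_parallel[OF a])
  obtain m where m: "c \<bullet> v = of_int m" using \<open>c \<bullet> v \<in> \<int>\<close> by (elim Ints_cases)
  then have "hyp c (of_int m) \<in> arrangement P" "v \<in> hyp c (of_int m)"
    using c by (auto simp: arrangement_def hyp_def)
  then have same: "hyp c (of_int m) = hyp a (of_int k)" using generic by blast
  fix y assume "a \<bullet> y = 0"
  then have "v + y \<in> hyp c (of_int m)" using v same by (simp add: hyp_def inner_add_right)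
  then show "c \<bullet> y = 0" using m by (simp add: hyp_def inner_add_right)
qed

locale facet_perturbation =
  fixes P :: "(real^'n) set" and Q :: "((real^'n) \<times> real) set"
    and a v :: "real^'n" and b :: real and k :: int
  assumes P_eq: "P = {x. \<forall>(c,d)\<in>Q. d \<le> c \<bullet> x}"
    and bounded_P: "bounded P"
    and finite_Q: "finite Q"
    and facet_in_Q: "(a, b) \<in> Q"
    and Q_int: "\<And>c d. (c, d) \<in> Q \<Longrightarrow> int_vec c \<and> d \<in> \<int>"
    and a_nonzero: "a \<noteq> 0"
    and facet_nonempty: "P \<inter> hyp a b \<noteq> {}"
    and v_on_hyp: "a \<bullet> v = of_int k"
    and Q_generic: "\<And>c d. (c, d) \<in> Q \<Longrightarrow> c \<bullet> v \<in> \<int> \<Longrightarrow> \<exists>l. c = l *\<^sub>R a \<and> (0 < l \<longrightarrow> d = l * b)"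
begin

definition lattice_points :: "nat \<Rightarrow> real^'n \<Rightarrow> (real^'n) set" where
  "lattice_points t w = {z. int_vec z \<and> (\<forall>(c,d)\<in>Q. real t * d + c \<bullet> w \<le> c \<bullet> z)}"

lemma P_nonempty: "P \<noteq> {}"
  using facet_nonempty by blast

lemma TL_eq_card_lattice_points: "TL P w t = card (lattice_points t w)"
  unfolding lattice_points_def by (rule TL_eq_card_constraints[OF P_eq bounded_P P_nonempty])

lemma finite_lattice_points: "finite (lattice_points t w)"
proof -
  have "lattice_points t w = (\<lambda>x. real t *\<^sub>R x + w) ` P \<inter> {z. int_vec z}"
    unfolding lattice_points_def
    using dilate_mem_iff[OF P_eq bounded_P P_nonempty of_nat_0_le_iff[of t], where w = w] by blast
  then show ?thesis using finite_dilate_int_vec[OF bounded_P] by simp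
qed

lemma small_perturbation_exists:
  "\<exists>e0>0. \<forall>s. \<bar>s\<bar> < e0 \<longrightarrow> (\<forall>(c,d)\<in>Q. \<bar>s * (c \<bullet> a)\<bar> < int_gap (c \<bullet> v))"
proof -
  define e0 where "e0 = Min (insert 1 ((\<lambda>(c,d). int_gap (c \<bullet> v) / (\<bar>c \<bullet> a\<bar> + 1)) ` Q))"
  have "e0 > 0" using finite_Q int_gap_pos by (auto simp: e0_def)
  moreover have "\<bar>s * (c \<bullet> a)\<bar> < int_gap (c \<bullet> v)" if "\<bar>s\<bar> < e0" "(c, d) \<in> Q" for s c d
  proof -
    have "\<bar>s\<bar> < int_gap (c \<bullet> v) / (\<bar>c \<bullet> a\<bar> + 1)"
      using that finite_Q by (force simp: e0_def)
    then have "\<bar>s\<bar> * (\<bar>c \<bullet> a\<bar> + 1) < int_gap (c \<bullet> v)" by (simp add: less_divide_eq add_nonneg_pos)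
    moreover have "\<bar>s\<bar> * \<bar>c \<bullet> a\<bar> \<le> \<bar>s\<bar> * (\<bar>c \<bullet> a\<bar> + 1)" by (simp add: mult_left_mono)
    ultimately show ?thesis by (simp add: abs_mult)
  qed
  ultimately show ?thesis by blast
qed

lemma mem_lattice_points_perturbed:
  assumes small: "\<forall>(c,d)\<in>Q. \<bar>s * (c \<bullet> a)\<bar> < int_gap (c \<bullet> v)"
  shows "z \<in> lattice_points t (v + s *\<^sub>R a) \<longleftrightarrow> int_vec z \<and> (\<forall>(c,d)\<in>Q.
    if c \<bullet> v \<in> \<int> \<and> 0 < s * (c \<bullet> a) then real t * d + c \<bullet> v < c \<bullet> z else real t * d + c \<bullet> v \<le> c \<bullet> z)"
proof -
  have "real t * d + c \<bullet> (v + s *\<^sub>R a) \<le> c \<bullet> z \<longleftrightarrow>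
    (if c \<bullet> v \<in> \<int> \<and> 0 < s * (c \<bullet> a) then real t * d + c \<bullet> v < c \<bullet> z else real t * d + c \<bullet> v \<le> c \<bullet> z)"
    if "(c, d) \<in> Q" "int_vec z" for c d
  proof -
    have "c \<bullet> z - real t * d \<in> \<int>" using Q_int[OF that(1)] int_vec_inner that(2) by auto
    from Ints_le_perturb_iff[OF this, where r = "c \<bullet> v" and x = "s * (c \<bullet> a)"] small that(1)
    show ?thesis by (auto simp: inner_add_right split: if_splits)
  qed
  then show ?thesis unfolding lattice_points_def by auto
qed

lemma lattice_points_shift_along_normal:
  assumes "0 < \<epsilon>" and small: "\<forall>(c,d)\<in>Q. \<bar>\<epsilon> * (c \<bullet> a)\<bar> < int_gap (c \<bullet> v)"
  shows "lattice_points t (v + \<epsilon> *\<^sub>R a) = {z \<in> lattice_points t v. real t * b + of_int k < a \<bullet> z}"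
proof -
  have strict_iff: "real t * d + c \<bullet> v < c \<bullet> z \<longleftrightarrow> real t * b + of_int k < a \<bullet> z"
    if cd: "(c, d) \<in> Q" "c \<bullet> v \<in> \<int>" "0 < \<epsilon> * (c \<bullet> a)" for c d z
  proof -
    obtain l where l: "c = l *\<^sub>R a" "0 < l \<longrightarrow> d = l * b" using Q_generic cd(1,2) by blast
    have "0 < a \<bullet> a" using a_nonzero by simp
    moreover have "0 < (\<epsilon> * l) * (a \<bullet> a)" using cd(3) by (simp add: l(1) mult.assoc)
    ultimately have "0 < l" using zero_less_mult_pos zero_less_mult_pos2 \<open>0 < \<epsilon>\<close> by blast
    then have "real t * d + c \<bullet> v = l * (real t * b + of_int k)" "c \<bullet> z = l * (a \<bullet> z)"
      using l v_on_hyp by (simp_all add: algebra_simps)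
    then show ?thesis using \<open>0 < l\<close> by simp
  qed
  have facet_special: "a \<bullet> v \<in> \<int> \<and> 0 < \<epsilon> * (a \<bullet> a)"
    using v_on_hyp \<open>0 < \<epsilon>\<close> a_nonzero by auto
  show ?thesis
  proof (intro set_eqI iffI)
    fix z assume "z \<in> lattice_points t (v + \<epsilon> *\<^sub>R a)"
    then have z: "int_vec z" and H: "\<And>c d. (c, d) \<in> Q \<Longrightarrow> if c \<bullet> v \<in> \<int> \<and> 0 < \<epsilon> * (c \<bullet> a)
        then real t * d + c \<bullet> v < c \<bullet> z else real t * d + c \<bullet> v \<le> c \<bullet> z"
      using mem_lattice_points_perturbed[OF small] by auto
    have "real t * d + c \<bullet> v \<le> c \<bullet> z" if "(c, d) \<in> Q" for c d
      using H[OF that] by (auto split: if_splits)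
    moreover have "real t * b + of_int k < a \<bullet> z"
      using H[OF facet_in_Q] facet_special strict_iff[OF facet_in_Q] by auto
    ultimately show "z \<in> {z \<in> lattice_points t v. real t * b + of_int k < a \<bullet> z}"
      using z by (auto simp: lattice_points_def)
  next
    fix z assume "z \<in> {z \<in> lattice_points t v. real t * b + of_int k < a \<bullet> z}"
    then show "z \<in> lattice_points t (v + \<epsilon> *\<^sub>R a)"
      unfolding mem_lattice_points_perturbed[OF small] using strict_iff
      by (auto simp: lattice_points_def)
  qed
qed

lemma TL_shift_along_normal:
  assumes "0 < \<epsilon>" and small: "\<forall>(c,d)\<in>Q. \<bar>\<epsilon> * (c \<bullet> a)\<bar> < int_gap (c \<bullet> v)"
  shows "int (TL P v t) - int (TL P (v + \<epsilon> *\<^sub>R a) t) = int (TL (P \<inter> hyp a b) v t)"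
proof -
  define A where "A = lattice_points t v"
  have "P \<inter> hyp a b = {x. \<forall>(c,d)\<in>insert (-a, -b) Q. d \<le> c \<bullet> x}"
    using facet_in_Q by (auto simp: P_eq hyp_def)
  moreover have "bounded (P \<inter> hyp a b)" using bounded_P by (simp add: bounded_Int)
  ultimately have "TL (P \<inter> hyp a b) v t
      = card {z. int_vec z \<and> (\<forall>(c,d)\<in>insert (-a, -b) Q. real t * d + c \<bullet> v \<le> c \<bullet> z)}"
    using facet_nonempty by (intro TL_eq_card_constraints)
  also have "{z. int_vec z \<and> (\<forall>(c,d)\<in>insert (-a, -b) Q. real t * d + c \<bullet> v \<le> c \<bullet> z)}
      = {z \<in> A. a \<bullet> z \<le> real t * b + of_int k}"
    by (auto simp: A_def lattice_points_def v_on_hyp)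
  also have "{z \<in> A. a \<bullet> z \<le> real t * b + of_int k} = A - lattice_points t (v + \<epsilon> *\<^sub>R a)"
    using lattice_points_shift_along_normal[OF assms] by (auto simp: A_def)
  also have "int (card \<dots>) = int (card A) - int (card (lattice_points t (v + \<epsilon> *\<^sub>R a)))"
  proof -
    have "lattice_points t (v + \<epsilon> *\<^sub>R a) \<subseteq> A"
      using lattice_points_shift_along_normal[OF assms] by (auto simp: A_def)
    then show ?thesis using finite_lattice_points by (simp add: A_def card_Diff_subset card_mono)
  qed
  finally show ?thesis by (simp add: A_def TL_eq_card_lattice_points)
qed

lemma TL_shift_against_normal:
  assumes "0 < \<epsilon>" and small: "\<forall>(c,d)\<in>Q. \<bar>(- \<epsilon>) * (c \<bullet> a)\<bar> < int_gap (c \<bullet> v)"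
    and no_opposite: "\<And>c d l. (c, d) \<in> Q \<Longrightarrow> l < 0 \<Longrightarrow> c \<noteq> l *\<^sub>R a"
  shows "TL P v t = TL P (v - \<epsilon> *\<^sub>R a) t"
proof -
  have "\<not> 0 < (- \<epsilon>) * (c \<bullet> a)" if cd: "(c, d) \<in> Q" "c \<bullet> v \<in> \<int>" for c d
  proof -
    obtain l where "c = l *\<^sub>R a" using Q_generic cd by blast
    moreover have "0 \<le> l" using no_opposite[OF cd(1), of l] calculation by force
    ultimately show ?thesis using \<open>0 < \<epsilon>\<close> by (simp add: not_less)
  qed
  then have "z \<in> lattice_points t (v + (- \<epsilon>) *\<^sub>R a) \<longleftrightarrow> z \<in> lattice_points t v" for z
    unfolding mem_lattice_points_perturbed[OF small] by (auto simp: lattice_points_def)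
  then have "lattice_points t (v + (- \<epsilon>) *\<^sub>R a) = lattice_points t v" by blast
  then show ?thesis by (simp add: TL_eq_card_lattice_points)
qed

end

lemma facet_perturbation_exists:
  fixes P :: "(real^'n) set"
  assumes P: "rational_full_polytope P" and pres: "in_presentation P a b"
    and v: "v \<in> hyp a (of_int k)" and generic: "\<forall>H\<in>arrangement P. H \<noteq> hyp a (of_int k) \<longrightarrow> v \<notin> H"
  obtains Q where "facet_perturbation P Q a v b k" "\<And>c d. (c, d) \<in> Q \<Longrightarrow> c \<in> normals P"
proof -
  obtain Q0 where Q0: "finite Q0" "\<forall>(c,d)\<in>Q0. in_presentation P c d" "P = {x. \<forall>(c,d)\<in>Q0. d \<le> c \<bullet> x}"
    using rational_full_polytope_presentation[OF P] by blast
  define Q where "Q = insert (a, b) Q0"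
  have Q_pres: "in_presentation P c d" if "(c, d) \<in> Q" for c d
    using that Q0(2) pres by (auto simp: Q_def)
  have "facet_perturbation P Q a v b k"
  proof
    show "P = {x. \<forall>(c,d)\<in>Q. d \<le> c \<bullet> x}"
      using Q0(3) in_presentationD(5)[OF pres] by (auto simp: Q_def)
    show "\<exists>l. c = l *\<^sub>R a \<and> (0 < l \<longrightarrow> d = l * b)" if "(c, d) \<in> Q" "c \<bullet> v \<in> \<int>" for c d
    proof -
      have "c \<in> normals P" using Q_pres[OF that(1)] by (auto simp: normals_def)
      then have "c = ((c \<bullet> a) / (a \<bullet> a)) *\<^sub>R a"
        using generic_normal_parallel that(2) in_presentationD(3)[OF pres] v generic by blast
      then show ?thesis using in_presentation_pos_multiple[OF pres] Q_pres[OF that(1)] by metis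
    qed
  qed (use Q0(1) Q_pres in_presentationD[OF pres] rational_full_polytope_bounded[OF P] v
       in \<open>auto simp: Q_def hyp_def dest: in_presentationD(1,2)\<close>)
  moreover have "c \<in> normals P" if "(c, d) \<in> Q" for c d
    using Q_pres[OF that] by (auto simp: normals_def)
  ultimately show ?thesis using that by blast
qed

theorem mainTheorem12:
  fixes P F :: "(real^'n) set" and a v :: "real^'n" and b :: real and k :: int
  assumes "rational_full_polytope P"
    and "in_presentation P a b"
    and "F = P \<inter> hyp a b"
    and "v \<in> hyp a (of_int k)"
    and "\<forall>H\<in>arrangement P. H \<noteq> hyp a (of_int k) \<longrightarrow> v \<notin> H"
  shows "\<exists>\<epsilon>0>0. \<forall>\<epsilon>. 0 < \<epsilon> \<and> \<epsilon> < \<epsilon>0 \<longrightarrow>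
           ((\<forall>t. int (TL P v t) - int (TL P (v + \<epsilon> *\<^sub>R a) t) = int (TL F v t))
             \<and> (\<exists>t. TL F v t \<noteq> 0))
         \<and> ((\<not> (\<exists>c::real. c > 0 \<and> - (c *\<^sub>R a) \<in> normals P)) \<longrightarrow>
             (\<forall>t. TL P v t = TL P (v - \<epsilon> *\<^sub>R a) t))"
proof -
  have av: "a \<bullet> v = of_int k" using assms(4) by (simp add: hyp_def)
  obtain Q where "facet_perturbation P Q a v b k" and normals: "\<And>c d. (c, d) \<in> Q \<Longrightarrow> c \<in> normals P"
    using facet_perturbation_exists[OF assms(1,2,4,5)] by blast
  then interpret facet_perturbation P Q a v b k by simp
  obtain e0 where e0: "e0 > 0" "\<And>s. \<bar>s\<bar> < e0 \<Longrightarrow> \<forall>(c,d)\<in>Q. \<bar>s * (c \<bullet> a)\<bar> < int_gap (c \<bullet> v)"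
    using small_perturbation_exists by blast
  have no_opposite: "c \<noteq> l *\<^sub>R a"
    if "\<not> (\<exists>c::real. c > 0 \<and> - (c *\<^sub>R a) \<in> normals P)" "(c, d) \<in> Q" "l < 0" for c d l
  proof
    assume "c = l *\<^sub>R a"
    then have "- ((- l) *\<^sub>R a) \<in> normals P" using normals[OF that(2)] by simp
    then show False using that(1,3) by (meson neg_0_less_iff_less)
  qed
  show ?thesis
    using e0 TL_shift_along_normal TL_shift_against_normal no_opposite
      TL_facet_nonzero[OF assms(1,2) av] assms(3)
    by (intro exI[of _ e0]) auto
qed

end
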